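(* Let $X,Y$ be nonempty compact Hausdorff spaces, $E\neq\{0_E\}$ a complex locally convex space, and $T:C(X,E)\to C(Y,E)$ a map with $\operatorname{Ran}(TF-TG)\subset\operatorname{Ran}(F-G)$ for all $F,G\in C(X,E)$ and $T(1\otimes 0_E)=1\otimes 0_E$. Then for each $u\in E\setminus\{0_E\}$ there exists a continuous map $\varphi_u:Y\to X$ such that $\tilde T_u f=f\circ\varphi_u$ for all $f\in C(X)$; in particular $\tilde T_u$ is linear.
   Context: $C(X,E)$ is the vector space of continuous functions $X\to E$; $\operatorname{Ran}(F)=\{F(x):x\in X\}$; $f\otimes u$ denotes $x\mapsto f(x)u$, and $1\otimes 0_E$ is the constant function $0_E$. For $u\in E\setminus\{0_E\}$ and $f\in C(X)$, $\tilde T_u f\in C(Y)$ is the unique function $Y\to\mathbb{C}$ with $T(f\otimes u)(y)=(\tilde T_uf)(y)u$ for all $y\in Y$. *)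

theory Defs
  imports "HOL-Analysis.Analysis"
begin

text \<open>A complex (Hausdorff) locally convex space: the carrier is the whole type 'e,
  addition/zero come from the class ab_group_add, complex scalar multiplication is
  the explicit operation smul, and the topology is tau.\<close>

definition complex_convex :: "(complex \<Rightarrow> 'e::ab_group_add \<Rightarrow> 'e) \<Rightarrow> 'e set \<Rightarrow> bool" where
  "complex_convex smul V \<longleftrightarrow>
     (\<forall>x\<in>V. \<forall>y\<in>V. \<forall>t::real. 0 \<le> t \<and> t \<le> 1 \<longrightarrow>
        smul (complex_of_real t) x + smul (complex_of_real (1 - t)) y \<in> V)"

definition complex_lcs :: "'e::ab_group_add topology \<Rightarrow> (complex \<Rightarrow> 'e \<Rightarrow> 'e) \<Rightarrow> bool" where
  "complex_lcs tau smul \<longleftrightarrow>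
     (\<forall>a x y. smul a (x + y) = smul a x + smul a y) \<and>
     (\<forall>a b x. smul (a + b) x = smul a x + smul b x) \<and>
     (\<forall>a b x. smul a (smul b x) = smul (a * b) x) \<and>
     (\<forall>x. smul 1 x = x) \<and>
     topspace tau = UNIV \<and>
     Hausdorff_space tau \<and>
     continuous_map (prod_topology tau tau) tau (\<lambda>(x, y). x + y) \<and>
     continuous_map (prod_topology euclidean tau) tau (\<lambda>(a, x). smul a x) \<and>
     (\<forall>U. openin tau U \<and> 0 \<in> U \<longrightarrow>
        (\<exists>V. openin tau V \<and> 0 \<in> V \<and> V \<subseteq> U \<and> complex_convex smul V))"

definition tensor :: "(complex \<Rightarrow> 'e \<Rightarrow> 'e) \<Rightarrow> ('a \<Rightarrow> complex) \<Rightarrow> 'e \<Rightarrow> 'a \<Rightarrow> 'e" where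
  "tensor smul f u = (\<lambda>x. smul (f x) u)"

definition Ran :: "'a topology \<Rightarrow> ('a \<Rightarrow> 'e) \<Rightarrow> 'e set" where
  "Ran X F = F ` topspace X"

definition tildeT :: "(complex \<Rightarrow> 'e \<Rightarrow> 'e) \<Rightarrow> (('a \<Rightarrow> 'e) \<Rightarrow> ('b \<Rightarrow> 'e)) \<Rightarrow> 'e
                      \<Rightarrow> ('a \<Rightarrow> complex) \<Rightarrow> 'b \<Rightarrow> complex" where
  "tildeT smul T u f = (\<lambda>y. THE c. T (tensor smul f u) y = smul c u)"

end

theory Submission
  imports Defs
begin

text \<open>Fix \<open>u \<noteq> 0\<close> and \<open>y \<in> Y\<close>. The functional \<open>L f = (\<tilde>T\<^sub>u f)(y)\<close> on \<open>C(X)\<close> satisfies \<open>L 0 = 0\<close> and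
  \<open>L f - L g \<in> Ran(f - g)\<close>. Along every real direction \<open>b\<close> the map \<open>w \<mapsto> L (a + w b)\<close> then has real
  difference quotients, hence is affine; boundedness of \<open>a\<close> pins down its slope, so
  \<open>L (a + w b) = L a + w L b\<close>. Consequently \<open>L\<close> annihilates \<open>|f - L f|\<^sup>2\<close> for every \<open>f\<close>, and if no
  point \<open>p\<close> had \<open>L f = f p\<close> for all \<open>f\<close>, compactness would give finitely many \<open>f\<close> for which
  the sum of these squares is positive on \<open>X\<close>, although \<open>L\<close> sends it to one of its values and to
  \<open>0\<close>. So \<open>\<tilde>T\<^sub>u f = f \<circ> \<phi>\<^sub>u\<close>; continuity of \<open>\<phi>\<^sub>u\<close> follows from continuity of the maps
  \<open>T (f \<otimes> u)\<close>, since \<open>c \<mapsto> c u\<close> is a topological embedding near \<open>0\<close> and \<open>X\<close> is completely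
  regular.\<close>

lemma continuous_map_mult [continuous_intros]:
  fixes f g :: "'a \<Rightarrow> 'b::real_normed_algebra"
  shows "continuous_map X euclidean f \<Longrightarrow> continuous_map X euclidean g \<Longrightarrow>
    continuous_map X euclidean (\<lambda>x. f x * g x)"
  by (simp add: continuous_map_atin tendsto_mult)

lemma continuous_map_of_real [continuous_intros]:
  "continuous_map X euclideanreal f \<Longrightarrow>
    continuous_map X euclidean (\<lambda>x. of_real (f x) :: 'b::real_normed_algebra_1)"
  by (simp add: continuous_map_atin tendsto_of_real)

lemma continuous_map_Re [continuous_intros]:
  "continuous_map X euclidean f \<Longrightarrow> continuous_map X euclideanreal (\<lambda>x. Re (f x))"
  by (simp add: continuous_map_atin tendsto_Re)

lemma continuous_map_Im [continuous_intros]: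
  "continuous_map X euclidean f \<Longrightarrow> continuous_map X euclideanreal (\<lambda>x. Im (f x))"
  by (simp add: continuous_map_atin tendsto_Im)

lemma real_slopes_imp_affine:
  fixes \<phi> :: "complex \<Rightarrow> complex"
  assumes slopes: "\<And>a b. \<exists>r::real. \<phi> a - \<phi> b = (a - b) * of_real r"
  shows "\<phi> z = \<phi> 0 + z * (\<phi> 1 - \<phi> 0)"
proof -
  obtain r0 where r0: "\<phi> 1 - \<phi> 0 = of_real r0"
    using slopes[of 1 0] by auto
  define \<psi> where "\<psi> w = \<phi> w - \<phi> 0 - w * of_real r0" for w
  have \<psi>_slopes: "\<exists>r::real. \<psi> a - \<psi> b = (a - b) * of_real r" for a b
  proof -
    obtain r where "\<phi> a - \<phi> b = (a - b) * of_real r"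
      using slopes by blast
    then show ?thesis
      by (intro exI[of _ "r - r0"]) (simp add: \<psi>_def algebra_simps)
  qed
  have \<psi>_0: "\<psi> 0 = 0" and \<psi>_1: "\<psi> 1 = 0"
    using r0 by (simp_all add: \<psi>_def)
  have \<psi>_nonreal: "\<psi> w = 0" if "Im w \<noteq> 0" for w
  proof -
    \<comment> \<open>\<open>\<psi> w\<close> is a real multiple of both \<open>w\<close> and \<open>w - 1\<close>, which are linearly independent over \<open>\<real>\<close>\<close>
    obtain s q where s: "\<psi> w = w * of_real s" and q: "\<psi> w = (w - 1) * of_real q"
      using \<psi>_slopes[of w 0] \<psi>_slopes[of w 1] \<psi>_0 \<psi>_1 by auto
    then have "w * of_real s = (w - 1) * of_real q"
      by simp
    from arg_cong[OF this, of Im] arg_cong[OF this, of Re] that have "s = 0"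
      by (simp add: algebra_simps)
    with s show ?thesis
      by simp
  qed
  have "\<psi> z = 0"
  proof (cases "Im z = 0")
    case True
    obtain s q where s: "\<psi> z = z * of_real s" and q: "\<psi> z = (z - \<i>) * of_real q"
      using \<psi>_slopes[of z 0] \<psi>_slopes[of z \<i>] \<psi>_0 \<psi>_nonreal[of \<i>] by auto
    from arg_cong[OF trans[OF s[symmetric] q], of Im] True have "q = 0"
      by simp
    with q show ?thesis
      by simp
  qed (rule \<psi>_nonreal)
  with r0 show ?thesis
    by (simp add: \<psi>_def algebra_simps)
qed

locale diff_range_functional =
  fixes X :: "'a topology" and L :: "('a \<Rightarrow> complex) \<Rightarrow> complex"
  assumes compact: "compact_space X"
    and zero: "L (\<lambda>x. 0) = 0"
    and diff_in_range: "\<And>f g. continuous_map X euclidean f \<Longrightarrow> continuous_map X euclidean g \<Longrightarrow>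
      \<exists>x\<in>topspace X. L f - L g = f x - g x"
begin

lemma value_in_range: "continuous_map X euclidean f \<Longrightarrow> \<exists>x\<in>topspace X. L f = f x"
  using diff_in_range[of f "\<lambda>x. 0"] zero by simp

lemma Im_of_real: "continuous_map X euclideanreal b \<Longrightarrow> Im (L (\<lambda>x. of_real (b x))) = 0"
  by (metis Im_complex_of_real continuous_map_of_real value_in_range)

lemma diff_const:
  assumes f: "continuous_map X euclidean f"
  shows "L (\<lambda>x. f x - c) = L f - c"
proof -
  have "continuous_map X euclidean (\<lambda>x. f x - c)"
    using f by (intro continuous_intros)
  with diff_in_range[OF f this] show ?thesis
    by (auto simp: algebra_simps)
qed

lemma real_slopes:
  assumes "continuous_map X euclidean c" and "continuous_map X euclideanreal b"
  shows "\<exists>r::real. L (\<lambda>x. c x + w * of_real (b x)) - L (\<lambda>x. c x + v * of_real (b x))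
    = (w - v) * of_real r"
proof -
  have "continuous_map X euclidean (\<lambda>x. c x + t * of_real (b x))" for t
    using assms by (intro continuous_intros)
  then obtain x where "L (\<lambda>x. c x + w * of_real (b x)) - L (\<lambda>x. c x + v * of_real (b x))
      = (c x + w * of_real (b x)) - (c x + v * of_real (b x))"
    using diff_in_range by blast
  then show ?thesis
    by (intro exI[of _ "b x"]) (simp add: algebra_simps)
qed

lemma add_mult_of_real:
  assumes a: "continuous_map X euclidean a" and b: "continuous_map X euclideanreal b"
  shows "L (\<lambda>x. a x + z * of_real (b x)) = L a + z * L (\<lambda>x. of_real (b x))"
proof -
  define \<phi> where "\<phi> w = L (\<lambda>x. a x + w * of_real (b x))" for w
  define \<psi> where "\<psi> w = L (\<lambda>x. 0 + w * of_real (b x))" for w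
  have \<phi>: "\<phi> w = L a + w * (\<phi> 1 - \<phi> 0)" for w
    using real_slopes_imp_affine[of \<phi> w] real_slopes[OF a b] by (simp add: \<phi>_def)
  have \<psi>: "\<psi> w = w * L (\<lambda>x. of_real (b x))" for w
    using real_slopes_imp_affine[of \<psi> w] real_slopes[OF _ b, of "\<lambda>x. 0"] by (simp add: \<psi>_def zero)
  define d where "d = \<phi> 1 - \<phi> 0 - L (\<lambda>x. of_real (b x))"
  have "d = 0"
  proof (rule ccontr)
    assume "d \<noteq> 0"
    have "compactin euclidean (a ` topspace X)"
      using image_compactin[OF compact[unfolded compact_space_def] a] .
    then have "bounded (a ` topspace X)"
      by (simp add: compact_imp_bounded)
    then have "a ` topspace X \<noteq> UNIV"
      by (metis not_bounded_UNIV)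
    then obtain c where c: "c \<notin> a ` topspace X"
      by blast
    define w where "w = (c - L a) / d"
    \<comment> \<open>\<open>\<phi> w - \<psi> w = L a + w d\<close> is a value of \<open>a\<close>, but for \<open>d \<noteq> 0\<close> it can be any complex number\<close>
    have cont: "continuous_map X euclidean (\<lambda>x. e x + w * of_real (b x))"
      if "continuous_map X euclidean e" for e
      using that b by (intro continuous_intros)
    obtain x where "x \<in> topspace X"
      and "\<phi> w - \<psi> w = (a x + w * of_real (b x)) - (0 + w * of_real (b x))"
      using diff_in_range[OF cont[OF a] cont[OF continuous_map_canonical_const]]
      unfolding \<phi>_def \<psi>_def by blast
    then have x: "x \<in> topspace X" "\<phi> w - \<psi> w = a x"
      by simp_all
    have "\<phi> w - \<psi> w = L a + w * d"
      using \<phi>[of w] \<psi>[of w] by (simp add: d_def algebra_simps)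
    also have "\<dots> = c"
      using \<open>d \<noteq> 0\<close> by (simp add: w_def)
    finally show False
      using x c by auto
  qed
  then show ?thesis
    using \<phi>[of z] by (simp add: \<phi>_def d_def)
qed

lemma add_of_real:
  "continuous_map X euclidean a \<Longrightarrow> continuous_map X euclideanreal b \<Longrightarrow>
    L (\<lambda>x. a x + of_real (b x)) = L a + L (\<lambda>x. of_real (b x))"
  using add_mult_of_real[of a b 1] by simp

lemma sum_of_real:
  "finite G \<Longrightarrow> (\<And>i. i \<in> G \<Longrightarrow> continuous_map X euclideanreal (q i)) \<Longrightarrow>
    L (\<lambda>x. of_real (\<Sum>i\<in>G. q i x)) = (\<Sum>i\<in>G. L (\<lambda>x. of_real (q i x)))"
proof (induction G rule: finite_induct)
  case empty
  then show ?case
    using zero by simp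
next
  case (insert i G)
  have "continuous_map X euclidean (\<lambda>x. complex_of_real (q i x))"
    using insert by (intro continuous_map_of_real) auto
  moreover have "continuous_map X euclideanreal (\<lambda>x. \<Sum>i\<in>G. q i x)"
    using insert by (intro continuous_map_sum) auto
  ultimately have "L (\<lambda>x. of_real (q i x) + of_real (\<Sum>i\<in>G. q i x))
      = L (\<lambda>x. of_real (q i x)) + L (\<lambda>x. of_real (\<Sum>i\<in>G. q i x))"
    by (rule add_of_real)
  also have "\<dots> = L (\<lambda>x. of_real (q i x)) + (\<Sum>i\<in>G. L (\<lambda>x. of_real (q i x)))"
    using insert by simp
  finally show ?case
    using insert by simp
qed

lemma Re_Im_decomposition:
  assumes f: "continuous_map X euclidean f"
  shows "L f = L (\<lambda>x. of_real (Re (f x))) + \<i> * L (\<lambda>x. of_real (Im (f x)))"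
proof -
  have "L f = L (\<lambda>x. of_real (Re (f x)) + \<i> * of_real (Im (f x)))"
    by (simp flip: complex_eq)
  also have "\<dots> = L (\<lambda>x. of_real (Re (f x))) + \<i> * L (\<lambda>x. of_real (Im (f x)))"
    using f by (intro add_mult_of_real continuous_intros)
  finally show ?thesis .
qed

lemma Re_Im_zero:
  assumes f: "continuous_map X euclidean f" and "L f = 0"
  shows "L (\<lambda>x. of_real (Re (f x))) = 0" and "L (\<lambda>x. of_real (Im (f x))) = 0"
proof -
  have "L (\<lambda>x. of_real (Re (f x))) + \<i> * L (\<lambda>x. of_real (Im (f x))) = 0"
    using Re_Im_decomposition[OF f] \<open>L f = 0\<close> by simp
  moreover note Im_of_real[OF continuous_map_Re[OF f]] Im_of_real[OF continuous_map_Im[OF f]]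
  ultimately show "L (\<lambda>x. of_real (Re (f x))) = 0" "L (\<lambda>x. of_real (Im (f x))) = 0"
    by (simp_all add: complex_eq_iff)
qed

lemma square_zero:
  assumes w: "continuous_map X euclideanreal w" and "L (\<lambda>x. of_real (w x)) = 0"
  shows "L (\<lambda>x. of_real (w x ^ 2)) = 0"
proof -
  have w2: "continuous_map X euclideanreal (\<lambda>x. w x ^ 2)"
    using w by (rule continuous_map_real_pow)
  \<comment> \<open>\<open>L (w\<^sup>2 + \<i> w) = L (w\<^sup>2)\<close> is real, but it is a value \<open>w x\<^sup>2 + \<i> w x\<close>, forcing \<open>w x = 0\<close>\<close>
  have "L (\<lambda>x. of_real (w x ^ 2) + \<i> * of_real (w x)) = L (\<lambda>x. of_real (w x ^ 2))"
    using add_mult_of_real[OF continuous_map_of_real[OF w2] w, of \<i>] \<open>L (\<lambda>x. of_real (w x)) = 0\<close>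
    by simp
  moreover have "continuous_map X euclidean (\<lambda>x. of_real (w x ^ 2) + \<i> * of_real (w x))"
    using w w2 by (intro continuous_intros)
  then obtain x where "L (\<lambda>x. of_real (w x ^ 2) + \<i> * of_real (w x)) = of_real (w x ^ 2) + \<i> * of_real (w x)"
    using value_in_range by blast
  moreover have "Im (L (\<lambda>x. of_real (w x ^ 2))) = 0"
    using w2 by (rule Im_of_real)
  ultimately show ?thesis
    by (auto simp: complex_eq_iff)
qed

lemma norm_diff_square_zero:
  assumes f: "continuous_map X euclidean f"
  shows "L (\<lambda>x. of_real ((cmod (f x - L f))\<^sup>2)) = 0"
proof -
  define h where "h = (\<lambda>x. f x - L f)"
  have h: "continuous_map X euclidean h"
    unfolding h_def using f by (intro continuous_intros)
  have "L h = 0"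
    using diff_const[OF f, of "L f"] by (simp add: h_def)
  have "L (\<lambda>x. of_real ((cmod (h x))\<^sup>2)) = L (\<lambda>x. of_real ((Re (h x))\<^sup>2) + of_real ((Im (h x))\<^sup>2))"
    by (simp add: cmod_power2)
  also have "\<dots> = L (\<lambda>x. of_real ((Re (h x))\<^sup>2)) + L (\<lambda>x. of_real ((Im (h x))\<^sup>2))"
    using h by (intro add_of_real continuous_map_of_real continuous_map_real_pow continuous_map_Re continuous_map_Im)
  also have "\<dots> = 0"
    using square_zero[OF continuous_map_Re[OF h] Re_Im_zero(1)[OF h \<open>L h = 0\<close>]]
      square_zero[OF continuous_map_Im[OF h] Re_Im_zero(2)[OF h \<open>L h = 0\<close>]] by simp
  finally show ?thesis
    by (simp add: h_def)
qed

lemma sum_norm_diff_square_zero: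
  assumes "finite G" and "\<And>f. f \<in> G \<Longrightarrow> continuous_map X euclidean f"
  shows "L (\<lambda>x. of_real (\<Sum>f\<in>G. (cmod (f x - L f))\<^sup>2)) = 0"
proof -
  have "continuous_map X euclideanreal (\<lambda>x. (cmod (f x - L f))\<^sup>2)" if "f \<in> G" for f
    using assms(2)[OF that] by (intro continuous_intros)
  then have "L (\<lambda>x. of_real (\<Sum>f\<in>G. (cmod (f x - L f))\<^sup>2))
      = (\<Sum>f\<in>G. L (\<lambda>x. of_real ((cmod (f x - L f))\<^sup>2)))"
    by (rule sum_of_real[OF assms(1)])
  also have "\<dots> = 0"
    using norm_diff_square_zero assms(2) by simp
  finally show ?thesis .
qed

lemma ex_point_evaluation: "\<exists>p\<in>topspace X. \<forall>f. continuous_map X euclidean f \<longrightarrow> L f = f p"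
proof (rule ccontr)
  assume "\<not> ?thesis"
  then have missed: "\<forall>p\<in>topspace X. \<exists>f. continuous_map X euclidean f \<and> f p \<noteq> L f"
    by metis
  define U where "U f = {x \<in> topspace X. f x \<in> - {L f}}" for f
  have U_open: "openin X (U f)" if "continuous_map X euclidean f" for f
    unfolding U_def using that
    by (metis openin_continuous_map_preimage open_Compl closed_singleton open_openin)
  have "\<exists>\<F>. finite \<F> \<and> \<F> \<subseteq> U ` {f. continuous_map X euclidean f} \<and> topspace X \<subseteq> \<Union>\<F>"
  proof (rule compact[unfolded compact_space_alt, rule_format], intro conjI ballI)
    show "openin X V" if "V \<in> U ` {f. continuous_map X euclidean f}" for V
      using that U_open by blast
    show "topspace X \<subseteq> \<Union> (U ` {f. continuous_map X euclidean f})"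
      using missed unfolding U_def by blast
  qed
  then obtain \<F> where \<F>: "finite \<F>" "\<F> \<subseteq> U ` {f. continuous_map X euclidean f}"
    and cover: "topspace X \<subseteq> \<Union>\<F>"
    by blast
  obtain G where "G \<subseteq> {f. continuous_map X euclidean f}" "finite G" "\<F> = U ` G"
    using finite_subset_image[OF \<F>] by blast
  then have G: "finite G" "\<And>f. f \<in> G \<Longrightarrow> continuous_map X euclidean f"
    and cover: "topspace X \<subseteq> \<Union>(U ` G)"
    using cover by auto
  \<comment> \<open>\<open>\<Sum>f\<in>G. |f - L f|\<^sup>2\<close> is positive on \<open>X\<close>, yet \<open>L\<close> maps it to one of its values and to \<open>0\<close>\<close>
  define q where "q f x = (cmod (f x - L f))\<^sup>2" for f x
  have q: "continuous_map X euclideanreal (q f)" if "f \<in> G" for f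
    unfolding q_def using G(2)[OF that] by (intro continuous_intros)
  then have sum_q: "continuous_map X euclideanreal (\<lambda>x. \<Sum>f\<in>G. q f x)"
    using G(1) by (intro continuous_map_sum) auto
  obtain x where x: "x \<in> topspace X" "L (\<lambda>x. of_real (\<Sum>f\<in>G. q f x)) = of_real (\<Sum>f\<in>G. q f x)"
    using value_in_range[OF continuous_map_of_real[OF sum_q]] by blast
  moreover have "L (\<lambda>x. of_real (\<Sum>f\<in>G. q f x)) = 0"
    unfolding q_def using sum_norm_diff_square_zero[OF G] .
  ultimately have "complex_of_real (\<Sum>f\<in>G. q f x) = 0"
    by (simp only:)
  then have "(\<Sum>f\<in>G. q f x) = 0"
    by (simp only: of_real_eq_0_iff)
  moreover have "\<forall>f\<in>G. 0 \<le> q f x"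
    by (simp add: q_def)
  ultimately have "\<forall>f\<in>G. f x = L f"
    using sum_nonneg_eq_0_iff[OF G(1), of "\<lambda>f. q f x"] by (simp add: q_def)
  moreover obtain f where "f \<in> G" "x \<in> U f"
    using cover x(1) by blast
  ultimately show False
    by (simp add: U_def)
qed

end

lemma continuous_map_into_completely_regular:
  assumes X: "completely_regular_space X" and \<phi>: "\<phi> \<in> topspace Y \<rightarrow> topspace X"
    and comp: "\<And>f. continuous_map X euclideanreal f \<Longrightarrow> continuous_map Y euclideanreal (f \<circ> \<phi>)"
  shows "continuous_map Y X \<phi>"
  unfolding continuous_map_def
proof (intro conjI allI impI)
  show "\<phi> \<in> topspace Y \<rightarrow> topspace X"
    by (rule \<phi>)
  fix U
  assume U: "openin X U"
  show "openin Y {y \<in> topspace Y. \<phi> y \<in> U}"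
  proof (subst openin_subopen, intro ballI)
    fix y0
    assume y0: "y0 \<in> {y \<in> topspace Y. \<phi> y \<in> U}"
    then obtain f where f: "continuous_map X euclideanreal f" "f (\<phi> y0) = 0" "f ` (topspace X - U) \<subseteq> {1}"
      using X U unfolding completely_regular_space_alt' by blast
    define N where "N = {y \<in> topspace Y. (f \<circ> \<phi>) y \<in> {..<1}}"
    have "openin Y N"
      unfolding N_def using comp[OF f(1)] by (rule openin_continuous_map_preimage) simp
    moreover have "y0 \<in> N"
      using y0 f(2) by (simp add: N_def)
    moreover have "N \<subseteq> {y \<in> topspace Y. \<phi> y \<in> U}"
      using f(3) \<phi> by (force simp: N_def)
    ultimately show "\<exists>N. openin Y N \<and> y0 \<in> N \<and> N \<subseteq> {y \<in> topspace Y. \<phi> y \<in> U}"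
      by blast
  qed
qed

locale complex_lcs_space =
  fixes tau :: "'e::ab_group_add topology" and smul :: "complex \<Rightarrow> 'e \<Rightarrow> 'e"
  assumes lcs: "complex_lcs tau smul"
begin

lemma
  shows smul_add_right: "smul a (x + y) = smul a x + smul a y"
    and smul_add_left: "smul (a + b) x = smul a x + smul b x"
    and smul_smul: "smul a (smul b x) = smul (a * b) x"
    and smul_one: "smul 1 x = x"
    and topspace_tau: "topspace tau = UNIV"
    and Hausdorff_tau: "Hausdorff_space tau"
    and continuous_smul: "continuous_map (prod_topology euclidean tau) tau (\<lambda>(a, x). smul a x)"
  using lcs unfolding complex_lcs_def by auto

lemma smul_zero_left [simp]: "smul 0 x = 0"
  using smul_add_left[of 0 0 x] by simp

lemma smul_zero_right [simp]: "smul a 0 = 0"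
  using smul_add_right[of a 0 0] by simp

lemma smul_diff_left: "smul (a - b) x = smul a x - smul b x"
  using smul_add_left[of "a - b" b x] by (simp add: algebra_simps)

lemma smul_cancel_right:
  assumes "u \<noteq> 0" and "smul a u = smul b u"
  shows "a = b"
proof (rule ccontr)
  assume "a \<noteq> b"
  have "u = smul (1 / (a - b)) (smul (a - b) u)"
    using \<open>a \<noteq> b\<close> by (simp add: smul_smul smul_one)
  also have "\<dots> = 0"
    using assms(2) by (simp add: smul_diff_left)
  finally show False
    using assms(1) by simp
qed

lemma continuous_map_smul_left: "continuous_map tau tau (smul k)"
proof -
  have "continuous_map tau (prod_topology euclidean tau) (\<lambda>x. (k, x))"
    by (intro continuous_map_pairedI continuous_map_canonical_const continuous_map_id[unfolded id_def])
  from continuous_map_compose[OF this continuous_smul] show ?thesis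
    by (simp add: o_def)
qed

lemma continuous_map_tensor:
  assumes "continuous_map X euclidean f"
  shows "continuous_map X tau (tensor smul f u)"
proof -
  have "continuous_map X (prod_topology euclidean tau) (\<lambda>x. (f x, u))"
    using assms by (intro continuous_map_pairedI) (auto simp: topspace_tau)
  from continuous_map_compose[OF this continuous_smul] show ?thesis
    by (simp add: o_def tensor_def)
qed

text \<open>A neighbourhood of \<open>0\<close> avoiding \<open>u\<close> is pulled back along the scalar multiplication at
  \<open>(0, 0)\<close> and then rescaled, so that it contains no \<open>smul c u\<close> with \<open>|c| \<ge> 1\<close>.\<close>
lemma ex_nbhd_bounding_multiples:
  assumes u: "u \<noteq> 0"
  obtains V where "openin tau V" "0 \<in> V" "\<And>c. smul c u \<in> V \<Longrightarrow> cmod c < 1"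
proof -
  obtain U0 where U0: "openin tau U0" "0 \<in> U0" "u \<notin> U0"
    using Hausdorff_tau u unfolding Hausdorff_space_def topspace_tau
    by (metis UNIV_I disjnt_iff)
  define S where "S = {z \<in> topspace (prod_topology euclidean tau). (\<lambda>(a, x). smul a x) z \<in> U0}"
  have "openin (prod_topology euclidean tau) S"
    unfolding S_def by (rule openin_continuous_map_preimage[OF continuous_smul U0(1)])
  moreover have "(0, 0) \<in> S"
    unfolding S_def using U0(2) by (simp add: topspace_tau)
  ultimately obtain U1 V1 where UV: "open U1" "openin tau V1" "0 \<in> U1" "0 \<in> V1" "U1 \<times> V1 \<subseteq> S"
    unfolding openin_prod_topology_alt by (metis open_openin)
  obtain \<delta> where \<delta>: "\<delta> > 0" "ball 0 \<delta> \<subseteq> U1"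
    using UV(1,3) open_contains_ball by blast
  define k where "k = complex_of_real (2 / \<delta>)"
  show thesis
  proof
    show "openin tau {x \<in> topspace tau. smul k x \<in> V1}"
      by (rule openin_continuous_map_preimage[OF continuous_map_smul_left UV(2)])
    show "0 \<in> {x \<in> topspace tau. smul k x \<in> V1}"
      using UV(4) by (simp add: topspace_tau)
    show "cmod c < 1" if "smul c u \<in> {x \<in> topspace tau. smul k x \<in> V1}" for c
    proof (rule ccontr)
      assume "\<not> cmod c < 1"
      then have c: "cmod c \<ge> 1"
        by simp
      then have "k * c \<noteq> 0"
        using \<delta>(1) by (auto simp: k_def)
      have "cmod (1 / (k * c)) = \<delta> / (2 * cmod c)"
        using \<delta>(1) by (simp add: k_def norm_divide norm_mult)
      also have "\<dots> \<le> \<delta> / 2"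
        using c \<delta>(1) by (simp add: divide_le_eq field_simps)
      also have "\<dots> < \<delta>"
        using \<delta>(1) by simp
      finally have "cmod (1 / (k * c)) < \<delta>" .
      moreover have "smul (k * c) u \<in> V1"
        using that by (simp add: smul_smul)
      ultimately have "(1 / (k * c), smul (k * c) u) \<in> S"
        using \<delta>(2) UV(5) by auto
      then have "u \<in> U0"
        using \<open>k * c \<noteq> 0\<close> by (simp add: S_def smul_smul smul_one)
      with U0(3) show False
        by simp
    qed
  qed
qed

end

locale range_decreasing_map = complex_lcs_space tau smul
  for tau :: "'e::ab_group_add topology" and smul +
  fixes X :: "'a topology" and Y :: "'b topology" and T :: "('a \<Rightarrow> 'e) \<Rightarrow> 'b \<Rightarrow> 'e" and u :: 'e
  assumes compact_X: "compact_space X" and Hausdorff_X: "Hausdorff_space X"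
    and continuous_T: "\<And>F. continuous_map X tau F \<Longrightarrow> continuous_map Y tau (T F)"
    and Ran_diff: "\<And>F G. continuous_map X tau F \<Longrightarrow> continuous_map X tau G \<Longrightarrow>
      Ran Y (\<lambda>y. T F y - T G y) \<subseteq> Ran X (\<lambda>x. F x - G x)"
    and T_zero: "\<forall>y\<in>topspace Y. T (\<lambda>x. 0) y = 0"
    and u_nonzero: "u \<noteq> 0"
begin

lemma T_tensor_diff:
  assumes "continuous_map X euclidean f" "continuous_map X euclidean g" "y \<in> topspace Y"
  shows "\<exists>x\<in>topspace X. T (tensor smul f u) y - T (tensor smul g u) y = smul (f x - g x) u"
proof -
  have "T (tensor smul f u) y - T (tensor smul g u) y
      \<in> Ran X (\<lambda>x. tensor smul f u x - tensor smul g u x)"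
    using Ran_diff[OF continuous_map_tensor continuous_map_tensor] assms unfolding Ran_def by blast
  then show ?thesis
    by (auto simp: Ran_def tensor_def smul_diff_left)
qed

lemma T_tensor_eq_tildeT:
  assumes f: "continuous_map X euclidean f" and y: "y \<in> topspace Y"
  shows "T (tensor smul f u) y = smul (tildeT smul T u f y) u"
proof -
  have "T (tensor smul (\<lambda>x. 0) u) y = 0"
    using T_zero y by (simp add: tensor_def)
  then obtain x where "T (tensor smul f u) y = smul (f x) u"
    using T_tensor_diff[OF f continuous_map_canonical_const[of X 0] y] by auto
  moreover have "tildeT smul T u f y = f x"
    unfolding tildeT_def using calculation smul_cancel_right[OF u_nonzero] by auto
  ultimately show ?thesis
    by simp
qed

lemma diff_range_functional_tildeT:
  assumes y: "y \<in> topspace Y"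
  shows "diff_range_functional X (\<lambda>f. tildeT smul T u f y)"
proof
  show "compact_space X"
    by (rule compact_X)
  have "smul (tildeT smul T u (\<lambda>x. 0) y) u = T (tensor smul (\<lambda>x. 0) u) y"
    using T_tensor_eq_tildeT[OF continuous_map_canonical_const[of X 0] y] by simp
  also have "\<dots> = smul 0 u"
    using T_zero y by (simp add: tensor_def)
  finally show "tildeT smul T u (\<lambda>x. 0) y = 0"
    by (rule smul_cancel_right[OF u_nonzero])
  show "\<exists>x\<in>topspace X. tildeT smul T u f y - tildeT smul T u g y = f x - g x"
    if f: "continuous_map X euclidean f" and g: "continuous_map X euclidean g" for f g
  proof -
    obtain x where "x \<in> topspace X"
      and "smul (tildeT smul T u f y - tildeT smul T u g y) u = smul (f x - g x) u"
      using T_tensor_diff[OF f g y] T_tensor_eq_tildeT[OF f y] T_tensor_eq_tildeT[OF g y]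
      by (auto simp: smul_diff_left)
    then show ?thesis
      using smul_cancel_right[OF u_nonzero] by blast
  qed
qed

definition point_map :: "'b \<Rightarrow> 'a" where
  "point_map y = (SOME p. p \<in> topspace X \<and>
     (\<forall>f. continuous_map X euclidean f \<longrightarrow> tildeT smul T u f y = f p))"

lemma
  assumes "y \<in> topspace Y"
  shows point_map_in_topspace: "point_map y \<in> topspace X"
    and tildeT_eq_point_map: "continuous_map X euclidean f \<Longrightarrow> tildeT smul T u f y = f (point_map y)"
proof -
  have "point_map y \<in> topspace X \<and>
      (\<forall>f. continuous_map X euclidean f \<longrightarrow> tildeT smul T u f y = f (point_map y))"
    unfolding point_map_def
    using diff_range_functional.ex_point_evaluation[OF diff_range_functional_tildeT[OF assms]]
    by (rule someI2_bex) blast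
  then show "point_map y \<in> topspace X"
    and "continuous_map X euclidean f \<Longrightarrow> tildeT smul T u f y = f (point_map y)"
    by blast+
qed

text \<open>The open set where \<open>T ((f - f (point_map y0)) / \<epsilon> \<otimes> u)\<close> lies in a neighbourhood of \<open>0\<close>
  containing no \<open>smul c u\<close> with \<open>|c| \<ge> 1\<close> is a neighbourhood of \<open>y0\<close> on which \<open>f \<circ> point_map\<close>
  varies by less than \<open>\<epsilon>\<close>.\<close>
lemma continuous_map_comp_point_map:
  fixes f :: "'a \<Rightarrow> complex"
  assumes f: "continuous_map X euclidean f"
  shows "continuous_map Y euclidean (\<lambda>y. f (point_map y))"
proof -
  have "continuous_map Y Met_TC.mtopology (\<lambda>y. f (point_map y))"
    unfolding Met_TC.continuous_map_to_metric mball_eq_ball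
  proof (intro ballI allI impI)
  fix y0 and \<epsilon> :: real
  assume y0: "y0 \<in> topspace Y" and "\<epsilon> > 0"
  obtain V where V: "openin tau V" "0 \<in> V" "\<And>c. smul c u \<in> V \<Longrightarrow> cmod c < 1"
    using ex_nbhd_bounding_multiples[OF u_nonzero] by blast
  define g where "g x = (f x - f (point_map y0)) / of_real \<epsilon>" for x
  have g: "continuous_map X euclidean g"
    unfolding g_def divide_inverse using f by (intro continuous_intros)
  define N where "N = {y \<in> topspace Y. T (tensor smul g u) y \<in> V}"
  have "openin Y N"
    unfolding N_def by (rule openin_continuous_map_preimage[OF continuous_T[OF continuous_map_tensor[OF g]] V(1)])
  moreover have "y0 \<in> N"
    using y0 V(2) T_tensor_eq_tildeT[OF g y0] tildeT_eq_point_map[OF y0 g] by (simp add: N_def g_def)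
  moreover have "f (point_map y) \<in> ball (f (point_map y0)) \<epsilon>" if "y \<in> N" for y
  proof -
    have "y \<in> topspace Y" "smul (g (point_map y)) u \<in> V"
      using that T_tensor_eq_tildeT[OF g] tildeT_eq_point_map[OF _ g] by (auto simp: N_def)
    then have "cmod (f (point_map y) - f (point_map y0)) / \<epsilon> < 1"
      using V(3) \<open>\<epsilon> > 0\<close> by (force simp: g_def norm_divide)
    then show ?thesis
      using \<open>\<epsilon> > 0\<close> by (simp add: dist_norm norm_minus_commute)
  qed
  ultimately show "\<exists>N. openin Y N \<and> y0 \<in> N \<and> (\<forall>y\<in>N. f (point_map y) \<in> ball (f (point_map y0)) \<epsilon>)"
    by blast
  qed
  then show ?thesis
    by simp
qed

lemma continuous_map_point_map: "continuous_map Y X point_map"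
proof (rule continuous_map_into_completely_regular)
  show "completely_regular_space X"
    using compact_X Hausdorff_X
    by (simp add: compact_Hausdorff_or_regular_imp_normal_space normal_imp_completely_regular_space)
  show "point_map \<in> topspace Y \<rightarrow> topspace X"
    using point_map_in_topspace by blast
  show "continuous_map Y euclideanreal (f \<circ> point_map)" if "continuous_map X euclideanreal f" for f
    using continuous_map_Re[OF continuous_map_comp_point_map[OF continuous_map_of_real[OF that]]]
    by (simp add: o_def)
qed

end

theorem lemma4p3:
  fixes X :: "'a topology" and Y :: "'b topology"
    and tau :: "'e::ab_group_add topology" and smul :: "complex \<Rightarrow> 'e \<Rightarrow> 'e"
    and T :: "('a \<Rightarrow> 'e) \<Rightarrow> ('b \<Rightarrow> 'e)"
  assumes "compact_space X" "Hausdorff_space X" "topspace X \<noteq> {}"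
    and "compact_space Y" "Hausdorff_space Y" "topspace Y \<noteq> {}"
    and "complex_lcs tau smul" "\<exists>e::'e. e \<noteq> 0"
    and "\<And>F. continuous_map X tau F \<Longrightarrow> continuous_map Y tau (T F)"
    and "\<And>F G. continuous_map X tau F \<Longrightarrow> continuous_map X tau G \<Longrightarrow>
            Ran Y (\<lambda>y. T F y - T G y) \<subseteq> Ran X (\<lambda>x. F x - G x)"
    and "\<forall>y\<in>topspace Y. T (\<lambda>x. 0) y = 0"
  shows "\<forall>u. u \<noteq> 0 \<longrightarrow>
           (\<exists>\<phi>. continuous_map Y X \<phi> \<and>
              (\<forall>f. continuous_map X euclidean f \<longrightarrow>
                 (\<forall>y\<in>topspace Y. tildeT smul T u f y = f (\<phi> y))) \<and>
              (\<forall>f g a b. continuous_map X euclidean f \<longrightarrow> continuous_map X euclidean g \<longrightarrow>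
                 (\<forall>y\<in>topspace Y. tildeT smul T u (\<lambda>x. a * f x + b * g x) y
                    = a * tildeT smul T u f y + b * tildeT smul T u g y)))"
proof (intro allI impI)
  fix u :: 'e
  assume "u \<noteq> 0"
  interpret range_decreasing_map tau smul X Y T u
    by unfold_locales (use assms \<open>u \<noteq> 0\<close> in auto)
  have linear: "continuous_map X euclidean (\<lambda>x. a * f x + b * g x)"
    if "continuous_map X euclidean f" "continuous_map X euclidean g" for f g and a b :: complex
    using that by (intro continuous_intros)
  show "\<exists>\<phi>. continuous_map Y X \<phi> \<and>
      (\<forall>f. continuous_map X euclidean f \<longrightarrow> (\<forall>y\<in>topspace Y. tildeT smul T u f y = f (\<phi> y))) \<and>
      (\<forall>f g a b. continuous_map X euclidean f \<longrightarrow> continuous_map X euclidean g \<longrightarrow>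
         (\<forall>y\<in>topspace Y. tildeT smul T u (\<lambda>x. a * f x + b * g x) y
            = a * tildeT smul T u f y + b * tildeT smul T u g y))"
    using continuous_map_point_map tildeT_eq_point_map linear by (intro exI[of _ point_map]) auto
qed

end
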